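(* Fix integers $T_0\ge 1$ and $t\ge 1$, real parameters $\beta_0,\beta_A$, nonnegative lag weights $g_1,g_2,\dots$ and $\pi_1,\pi_2,\dots$, ascertainment rates $\alpha_1,\dots,\alpha_t$, and a fixed intervention sequence $a_{-T_0+1},\dots,a_0,a_1,\dots,a_t$. Let the seeding values be deterministic: $I_s=0$ for $s\le -T_0$ and $I_s$ given (e.g. $I_s=e^{\mu}$) for $s=-T_0+1,\dots,0$, and write $\bar I_0=(I_{-T_0+1},\dots,I_0)^\top$. Let $I_r(\bar a_r)$, $Y_r(\bar a_r)$, $r=1,\dots,t$, be the counterfactual infection and outcome processes under the intervention fixing $A_s=a_s$ for all $s$, with integrable values, satisfying (with $I_s(\bar a_s):=I_s$ for $s\le 0$) for each $r=1,\dots,t$: \[ \mathbb{E}\big[I_r(\bar a_r)\,\big|\,I_s(\bar a_s),\,s<r;\ Y_s(\bar a_s),\,s<r\big]=\sum_{s<r} e^{\beta_0+\beta_A a_s}\, g_{r-s}\, I_s(\bar a_s)\quad\text{(exponential model)}, \] \[ \mathbb{E}\big[Y_r(\bar a_r)\,\big|\,I_s(\bar a_s),\,s\le r;\ Y_s(\bar a_s),\,s<r\big]=\alpha_r\sum_{s<r}\pi_{r-s}\, I_s(\bar a_s). \] Define the $t\times t$ matrix $\Lambda^e$ by $\Lambda^e(r,s)=g_{r-s}e^{\beta_0+\beta_A a_s}$ for $s<r$ and $0$ otherwise; the $t\times T_0$ matrix $\Lambda^e_0$ with rows indexed by $r=1,\dots,t$ and columns by $s=-T_0+1,\dots,0$,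 $\Lambda^e_0(r,s)=g_{r-s}e^{\beta_0+\beta_A a_s}$; the $t\times t$ matrix $\Pi$ with $\Pi(r,s)=\pi_{r-s}\alpha_r$ for $s<r$ and $0$ otherwise; and the $t\times T_0$ matrix $\Pi_0$ with $\Pi_0(r,s)=\pi_{r-s}\alpha_r$ for $s=-T_0+1,\dots,0$. Then \[ \mathbb{E}[I_t(\bar a_t)]=\big[(\mathrm{id}-\Lambda^e)^{-1}\Lambda^e_0\,\bar I_0\big]_t,\qquad \mathbb{E}[Y_t(\bar a_t)]=\big[\{\Pi(\mathrm{id}-\Lambda^e)^{-1}\Lambda^e_0+\Pi_0\}\,\bar I_0\big]_t, \] where $[v]_t$ denotes the $t$-th (last) entry of the vector $v$. The same formulas hold for the multiplicative model, in which the infection equation is replaced by \[ \mathbb{E}\big[I_r(\bar a_r)\,\big|\,I_s(\bar a_s),\,s<r;\ Y_s(\bar a_s),\,s<r\big]=R(\bar a_r,\beta)\sum_{s<r} g_{r-s}\, I_s(\bar a_s),\qquad R(\bar a_r,\beta)=\frac{K}{1+\exp(\beta_0+\beta_A a_r)} \] for a constant $K>0$, with $\Lambda^e,\Lambda^e_0$ replaced respectively by $\Lambda^m$, $\Lambda^m_0$ defined by $\Lambda^m(r,s)=g_{r-s}R(\bar a_r,\beta)$ for $s<r$ (and $0$ otherwise) and $\Lambda^m_0(r,s)=g_{r-s}R(\bar a_r,\beta)$ for $s=-T_0+1,\dots,0$.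
   Context: This concerns the semi-mechanistic (Hawkes-type) epidemic model: $I_t$ are (unobserved) infections, $Y_t$ observed outcomes (e.g. deaths), $A_t$ an intervention, $g$ the generation-interval distribution and $\pi$ the infection-to-outcome delay distribution, $\alpha_t$ the ascertainment rate and $R$ the reproduction number. The counterfactual $I_t(\bar a_t)$ (resp. $Y_t(\bar a_t)$) is the value $I_t$ (resp. $Y_t$) would take if the intervention history $(A_s)_{s\le t}$ were set to $\bar a_t=(a_s)_{s\le t}$; under this intervention the model equations above hold with $A_s$ replaced by the fixed values $a_s$. $\mathrm{id}$ denotes the $t\times t$ identity matrix (note $\Lambda^e,\Lambda^m$ are strictly lower triangular so $\mathrm{id}-\Lambda$ is invertible). *)

theory Defs
  imports "HOL-Probability.Probability" "Jordan_Normal_Form.Gauss_Jordan_Elimination"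
begin

definition gen_sigma :: "'a measure \<Rightarrow> ('a \<Rightarrow> real) set \<Rightarrow> 'a measure" where
  "gen_sigma M Xs = sigma (space M) (\<Union>X\<in>Xs. {X -` B \<inter> space M | B. B \<in> sets borel})"

(* Time points are integers. Rows r = 1..t are stored at index i = r-1;
   seeding columns s = -T0+1..0 are stored at index j = s + T0 - 1. *)

definition LamM :: "nat \<Rightarrow> (int \<Rightarrow> int \<Rightarrow> real) \<Rightarrow> real mat" where
  "LamM t W = mat t t (\<lambda>(i,j). if j < i then W (int i + 1) (int j + 1) else 0)"

definition LamM0 :: "nat \<Rightarrow> nat \<Rightarrow> (int \<Rightarrow> int \<Rightarrow> real) \<Rightarrow> real mat" where
  "LamM0 t T0 W = mat t T0 (\<lambda>(i,j). W (int i + 1) (int j - int T0 + 1))"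

definition W_exp :: "(nat \<Rightarrow> real) \<Rightarrow> real \<Rightarrow> real \<Rightarrow> (int \<Rightarrow> real) \<Rightarrow> int \<Rightarrow> int \<Rightarrow> real" where
  "W_exp g \<beta>0 \<beta>A a r s = g (nat (r - s)) * exp (\<beta>0 + \<beta>A * a s)"

definition R_mult :: "real \<Rightarrow> real \<Rightarrow> real \<Rightarrow> (int \<Rightarrow> real) \<Rightarrow> int \<Rightarrow> real" where
  "R_mult K \<beta>0 \<beta>A a r = K / (1 + exp (\<beta>0 + \<beta>A * a r))"

definition W_mult :: "real \<Rightarrow> (nat \<Rightarrow> real) \<Rightarrow> real \<Rightarrow> real \<Rightarrow> (int \<Rightarrow> real) \<Rightarrow> int \<Rightarrow> int \<Rightarrow> real" where
  "W_mult K g \<beta>0 \<beta>A a r s = g (nat (r - s)) * R_mult K \<beta>0 \<beta>A a r"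

definition PiW :: "(nat \<Rightarrow> real) \<Rightarrow> (int \<Rightarrow> real) \<Rightarrow> int \<Rightarrow> int \<Rightarrow> real" where
  "PiW \<pi> \<alpha> r s = \<pi> (nat (r - s)) * \<alpha> r"

definition Ibar0 :: "nat \<Rightarrow> (int \<Rightarrow> real) \<Rightarrow> real vec" where
  "Ibar0 T0 Iseed = vec T0 (\<lambda>j. Iseed (int j - int T0 + 1))"

definition cf_model ::
  "'a measure \<Rightarrow> nat \<Rightarrow> nat \<Rightarrow> (int \<Rightarrow> real) \<Rightarrow> (int \<Rightarrow> int \<Rightarrow> real) \<Rightarrow> (nat \<Rightarrow> real)
   \<Rightarrow> (int \<Rightarrow> real) \<Rightarrow> (int \<Rightarrow> 'a \<Rightarrow> real) \<Rightarrow> (int \<Rightarrow> 'a \<Rightarrow> real) \<Rightarrow> bool" where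
  "cf_model M T0 t Iseed W \<pi> \<alpha> I Y \<longleftrightarrow>
     (\<forall>s \<le> 0. \<forall>\<omega>\<in>space M. I s \<omega> = (if s \<le> - int T0 then 0 else Iseed s)) \<and>
     (\<forall>r\<in>{1..int t}. integrable M (I r) \<and> integrable M (Y r)) \<and>
     (\<forall>r\<in>{1..int t}.
        AE \<omega> in M. real_cond_exp M
            (gen_sigma M (I ` {s. s < r} \<union> Y ` {1..<r})) (I r) \<omega>
          = (\<Sum>s\<in>{1 - int T0..<r}. W r s * I s \<omega>)) \<and>
     (\<forall>r\<in>{1..int t}.
        AE \<omega> in M. real_cond_exp M
            (gen_sigma M (I ` {s. s \<le> r} \<union> Y ` {1..<r})) (Y r) \<omega>
          = \<alpha> r * (\<Sum>s\<in>{1 - int T0..<r}. \<pi> (nat (r - s)) * I s \<omega>))"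

end

theory Submission
  imports Defs "Jordan_Normal_Form.Determinant"
begin

text \<open>
  Taking expectations of the two conditional-mean equations (tower property) turns the model
  into a deterministic linear recursion for the mean infections \<open>m r = E[I r]\<close>: on the
  window \<open>r = 1..t\<close> it reads \<open>m = \<Lambda> m + \<Lambda>\<^sub>0 I\<^sub>0\<close>, where \<open>I\<^sub>0\<close> is the
  deterministic seed vector. As \<open>\<Lambda>\<close> is strictly lower triangular, \<open>id - \<Lambda>\<close> has
  determinant 1, so \<open>m = (id - \<Lambda>)\<^sup>-\<^sup>1 \<Lambda>\<^sub>0 I\<^sub>0\<close>, and the mean outcome is
  \<open>\<Pi> m + \<Pi>\<^sub>0 I\<^sub>0\<close>. The infection weights enter only through \<open>\<Lambda>\<close>, so the
  exponential and the multiplicative model are two instances of one argument.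
\<close>

lemma sum_seed_window_split:
  fixes f :: "int \<Rightarrow> 'b::comm_monoid_add"
  shows "(\<Sum>s\<in>{1 - int T0..<int i + 1}. f s) =
    (\<Sum>j<T0. f (int j - int T0 + 1)) + (\<Sum>k<i. f (int k + 1))"
proof -
  have seed: "{1 - int T0..<1} = (\<lambda>j. int j - int T0 + 1) ` {..<T0}"
  proof (intro equalityI subsetI)
    fix s assume "s \<in> {1 - int T0..<1}"
    then show "s \<in> (\<lambda>j. int j - int T0 + 1) ` {..<T0}"
      by (intro image_eqI[where x = "nat (s + int T0 - 1)"]) auto
  qed auto
  have window: "{1..<int i + 1} = (\<lambda>k. int k + 1) ` {..<i}"
  proof (intro equalityI subsetI)
    fix s assume "s \<in> {1..<int i + 1}"
    then show "s \<in> (\<lambda>k. int k + 1) ` {..<i}"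
      by (intro image_eqI[where x = "nat (s - 1)"]) auto
  qed auto
  have "{1 - int T0..<int i + 1} = {1 - int T0..<1} \<union> {1..<int i + 1}" by auto
  then have "(\<Sum>s\<in>{1 - int T0..<int i + 1}. f s)
      = (\<Sum>s\<in>{1 - int T0..<1}. f s) + (\<Sum>s\<in>{1..<int i + 1}. f s)"
    by (simp add: sum.union_disjoint)
  also have "\<dots> = (\<Sum>j<T0. f (int j - int T0 + 1)) + (\<Sum>k<i. f (int k + 1))"
    unfolding seed window by (simp add: sum.reindex inj_on_def)
  finally show ?thesis .
qed

lemma mult_mult_add_mat_vec:
  fixes A :: "'a::comm_ring mat"
  assumes "A \<in> carrier_mat n1 n2" and "B \<in> carrier_mat n2 n3" and "C \<in> carrier_mat n3 n4"
    and "D \<in> carrier_mat n1 n4" and "v \<in> carrier_vec n4"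
  shows "(A * B * C + D) *\<^sub>v v = A *\<^sub>v ((B * C) *\<^sub>v v) + D *\<^sub>v v"
  using assms
  by (simp add: add_mult_distrib_mat_vec[of _ n1 n4] assoc_mult_mat[of A n1 n2 B n3 C n4]
      assoc_mult_mat_vec[of A n1 n2 "B * C" n4] assoc_mult_mat_vec[of B n2 n3 C n4])

lemma subalgebra_gen_sigma:
  assumes "\<And>X. X \<in> Xs \<Longrightarrow> X \<in> borel_measurable M"
  shows "subalgebra M (gen_sigma M Xs)"
proof -
  have "(\<Union>X\<in>Xs. {X -` B \<inter> space M | B. B \<in> sets borel}) \<subseteq> sets M"
    using assms by (auto intro: measurable_sets)
  moreover have "(\<Union>X\<in>Xs. {X -` B \<inter> space M | B. B \<in> sets borel}) \<subseteq> Pow (space M)"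
    by auto
  ultimately show ?thesis
    unfolding subalgebra_def gen_sigma_def by (auto simp: sets.sigma_sets_subset)
qed

lemma integral_eq_of_real_cond_exp_AE_sum:
  assumes "finite_measure M" and "subalgebra M F" and "integrable M X"
    and "finite S" and Z: "\<And>s. s \<in> S \<Longrightarrow> integrable M (Z s)"
    and AE: "AE \<omega> in M. real_cond_exp M F X \<omega> = (\<Sum>s\<in>S. c s * Z s \<omega>)"
  shows "integral\<^sup>L M X = (\<Sum>s\<in>S. c s * integral\<^sup>L M (Z s))"
proof -
  interpret finite_measure_subalgebra M F
    using assms by (simp add: finite_measure_subalgebra_def finite_measure_subalgebra_axioms_def)
  have "integral\<^sup>L M X = integral\<^sup>L M (real_cond_exp M F X)"
    using real_cond_exp_int(2)[OF \<open>integrable M X\<close>] by simp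
  also have "\<dots> = integral\<^sup>L M (\<lambda>\<omega>. \<Sum>s\<in>S. c s * Z s \<omega>)"
    using AE Z by (intro integral_cong_AE) auto
  also have "\<dots> = (\<Sum>s\<in>S. c s * integral\<^sup>L M (Z s))"
    using Z by (simp add: Bochner_Integration.integral_sum)
  finally show ?thesis .
qed

definition traj_vec :: "nat \<Rightarrow> (int \<Rightarrow> real) \<Rightarrow> real vec" where
  "traj_vec t e = vec t (\<lambda>i. e (int i + 1))"

lemma dim_LamM [simp]: "dim_row (LamM t W) = t" "dim_col (LamM t W) = t"
  by (simp_all add: LamM_def)

lemma dim_LamM0 [simp]: "dim_row (LamM0 t T0 W) = t" "dim_col (LamM0 t T0 W) = T0"
  by (simp_all add: LamM0_def)

lemma dim_Ibar0 [simp]: "dim_vec (Ibar0 T0 Iseed) = T0"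
  by (simp add: Ibar0_def)

lemma dim_traj_vec [simp]: "dim_vec (traj_vec t e) = t"
  by (simp add: traj_vec_def)

lemma LamM_carrier [simp]: "LamM t W \<in> carrier_mat t t"
  by (rule carrier_matI) simp_all

lemma LamM0_carrier [simp]: "LamM0 t T0 W \<in> carrier_mat t T0"
  by (rule carrier_matI) simp_all

lemma Ibar0_carrier [simp]: "Ibar0 T0 Iseed \<in> carrier_vec T0"
  by (rule carrier_vecI) simp

lemma traj_vec_carrier [simp]: "traj_vec t e \<in> carrier_vec t"
  by (rule carrier_vecI) simp

lemma LamM_mult_vec_nth:
  assumes "i < t" and "x \<in> carrier_vec t"
  shows "(LamM t W *\<^sub>v x) $ i = (\<Sum>k<i. W (int i + 1) (int k + 1) * x $ k)"
proof -
  have "(LamM t W *\<^sub>v x) $ i = (\<Sum>k<t. (if k < i then W (int i + 1) (int k + 1) else 0) * x $ k)"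
    using assms by (simp add: LamM_def scalar_prod_def lessThan_atLeast0)
  also have "\<dots> = (\<Sum>k<i. W (int i + 1) (int k + 1) * x $ k)"
    using \<open>i < t\<close> by (intro sum.mono_neutral_cong_right) auto
  finally show ?thesis .
qed

lemma LamM0_mult_Ibar0_nth:
  assumes "i < t"
  shows "(LamM0 t T0 W *\<^sub>v Ibar0 T0 Iseed) $ i
    = (\<Sum>j<T0. W (int i + 1) (int j - int T0 + 1) * Iseed (int j - int T0 + 1))"
  using assms by (simp add: LamM0_def Ibar0_def scalar_prod_def lessThan_atLeast0)

lemma LamM_convolution_nth:
  assumes "i < t" and seed: "\<And>s. 1 - int T0 \<le> s \<Longrightarrow> s \<le> 0 \<Longrightarrow> e s = Iseed s"
  shows "(LamM t W *\<^sub>v traj_vec t e + LamM0 t T0 W *\<^sub>v Ibar0 T0 Iseed) $ i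
    = (\<Sum>s\<in>{1 - int T0..<int i + 1}. W (int i + 1) s * e s)"
proof -
  have seed_part: "(\<Sum>j<T0. W (int i + 1) (int j - int T0 + 1) * Iseed (int j - int T0 + 1))
      = (\<Sum>j<T0. W (int i + 1) (int j - int T0 + 1) * e (int j - int T0 + 1))"
    by (intro sum.cong) (auto simp: seed)
  have "(LamM t W *\<^sub>v traj_vec t e + LamM0 t T0 W *\<^sub>v Ibar0 T0 Iseed) $ i
      = (LamM t W *\<^sub>v traj_vec t e) $ i + (LamM0 t T0 W *\<^sub>v Ibar0 T0 Iseed) $ i"
    using \<open>i < t\<close> by (simp del: index_mult_mat_vec)
  also have "\<dots> = (\<Sum>j<T0. W (int i + 1) (int j - int T0 + 1) * e (int j - int T0 + 1))
      + (\<Sum>k<i. W (int i + 1) (int k + 1) * e (int k + 1))"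
    using \<open>i < t\<close> seed_part
    by (simp add: LamM_mult_vec_nth LamM0_mult_Ibar0_nth traj_vec_def del: index_mult_mat_vec)
  also have "\<dots> = (\<Sum>s\<in>{1 - int T0..<int i + 1}. W (int i + 1) s * e s)"
    by (rule sum_seed_window_split[symmetric])
  finally show ?thesis .
qed

lemma det_one_minus_LamM: "det (1\<^sub>m t - LamM t W) = 1"
proof -
  have "det (1\<^sub>m t - LamM t W) = prod_list (diag_mat (1\<^sub>m t - LamM t W))"
    by (rule det_lower_triangular[of t]) (auto simp: LamM_def)
  also have "diag_mat (1\<^sub>m t - LamM t W) = replicate t 1"
    by (rule nth_equalityI) (auto simp: diag_mat_def LamM_def)
  finally show ?thesis by simp
qed

lemma mat_inverse_one_minus_LamM:
  shows "the (mat_inverse (1\<^sub>m t - LamM t W)) * (1\<^sub>m t - LamM t W) = 1\<^sub>m t"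
    and "the (mat_inverse (1\<^sub>m t - LamM t W)) \<in> carrier_mat t t"
proof -
  have A: "1\<^sub>m t - LamM t W \<in> carrier_mat t t"
    by (simp add: minus_carrier_mat)
  then have "1\<^sub>m t - LamM t W \<in> Units (ring_mat TYPE(real) t ())"
    by (rule det_non_zero_imp_unit) (simp add: det_one_minus_LamM)
  then obtain Inv where "mat_inverse (1\<^sub>m t - LamM t W) = Some Inv"
    using mat_inverse(1)[OF A] by fastforce
  with mat_inverse(2)[OF A this]
  show "the (mat_inverse (1\<^sub>m t - LamM t W)) * (1\<^sub>m t - LamM t W) = 1\<^sub>m t"
    and "the (mat_inverse (1\<^sub>m t - LamM t W)) \<in> carrier_mat t t"
    by simp_all
qed

lemma fixed_point_LamM:
  assumes "x \<in> carrier_vec t" and "L0 \<in> carrier_mat t n" and "b \<in> carrier_vec n"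
    and fixed: "x = LamM t W *\<^sub>v x + L0 *\<^sub>v b"
  shows "x = (the (mat_inverse (1\<^sub>m t - LamM t W)) * L0) *\<^sub>v b"
proof -
  define Inv where "Inv = the (mat_inverse (1\<^sub>m t - LamM t W))"
  have left_inv: "Inv * (1\<^sub>m t - LamM t W) = 1\<^sub>m t" and Inv_carrier: "Inv \<in> carrier_mat t t"
    unfolding Inv_def by (rule mat_inverse_one_minus_LamM)+
  have "x $ i = (LamM t W *\<^sub>v x) $ i + (L0 *\<^sub>v b) $ i" if "i < t" for i
  proof -
    from fixed have "x $ i = (LamM t W *\<^sub>v x + L0 *\<^sub>v b) $ i" by (rule arg_cong)
    also have "\<dots> = (LamM t W *\<^sub>v x) $ i + (L0 *\<^sub>v b) $ i"
      using \<open>i < t\<close> \<open>L0 \<in> carrier_mat t n\<close> by (simp del: index_mult_mat_vec)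
    finally show ?thesis .
  qed
  then have eq: "(1\<^sub>m t - LamM t W) *\<^sub>v x = L0 *\<^sub>v b"
    using assms
    by (intro eq_vecI) (auto simp: minus_mult_distrib_mat_vec[OF one_carrier_mat LamM_carrier])
  have "x = (Inv * (1\<^sub>m t - LamM t W)) *\<^sub>v x"
    using left_inv \<open>x \<in> carrier_vec t\<close> by simp
  also have "\<dots> = Inv *\<^sub>v ((1\<^sub>m t - LamM t W) *\<^sub>v x)"
    using Inv_carrier minus_carrier_mat[OF LamM_carrier] \<open>x \<in> carrier_vec t\<close>
    by (rule assoc_mult_mat_vec)
  also have "\<dots> = (Inv * L0) *\<^sub>v b"
    unfolding eq using Inv_carrier assms(2,3) by (simp add: assoc_mult_mat_vec)
  finally show ?thesis unfolding Inv_def .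
qed

lemma cf_model_integrable_infections:
  assumes "finite_measure M" and "cf_model M T0 t Iseed W \<pi> \<alpha> I Y" and "s \<le> int t"
  shows "integrable M (I s)"
proof (cases "s \<le> 0")
  case True
  interpret finite_measure M by fact
  have "\<And>\<omega>. \<omega> \<in> space M \<Longrightarrow> I s \<omega> = (if s \<le> - int T0 then 0 else Iseed s)"
    using assms(2) True by (simp add: cf_model_def)
  then have "integrable M (I s) = integrable M (\<lambda>_. if s \<le> - int T0 then 0 else Iseed s)"
    by (rule Bochner_Integration.integrable_cong[OF refl])
  then show ?thesis by simp
next
  case False
  with assms show ?thesis by (simp add: cf_model_def)
qed

lemma cf_model_mean_seed:
  assumes "prob_space M" and "cf_model M T0 t Iseed W \<pi> \<alpha> I Y" and "s \<le> 0"
  shows "integral\<^sup>L M (I s) = (if s \<le> - int T0 then 0 else Iseed s)"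
proof -
  interpret prob_space M by fact
  have "\<And>\<omega>. \<omega> \<in> space M \<Longrightarrow> I s \<omega> = (if s \<le> - int T0 then 0 else Iseed s)"
    using assms(2,3) by (simp add: cf_model_def)
  then have "integral\<^sup>L M (I s) = integral\<^sup>L M (\<lambda>_. if s \<le> - int T0 then 0 else Iseed s)"
    by (rule Bochner_Integration.integral_cong[OF refl])
  then show ?thesis by (simp add: prob_space)
qed

lemma cf_model_history_subalgebra:
  assumes "finite_measure M" and "cf_model M T0 t Iseed W \<pi> \<alpha> I Y"
    and "\<And>s. s \<in> A \<Longrightarrow> s \<le> int t" and "B \<subseteq> {1..int t}"
  shows "subalgebra M (gen_sigma M (I ` A \<union> Y ` B))"
proof (rule subalgebra_gen_sigma)
  have "\<And>s. s \<in> B \<Longrightarrow> integrable M (Y s)"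
    using assms(2,4) by (auto simp: cf_model_def)
  then show "X \<in> borel_measurable M" if "X \<in> I ` A \<union> Y ` B" for X
    using that cf_model_integrable_infections[OF assms(1,2)] assms(3) by auto
qed

lemma cf_model_mean_infections:
  assumes "finite_measure M" and "cf_model M T0 t Iseed W \<pi> \<alpha> I Y" and "r \<in> {1..int t}"
  shows "integral\<^sup>L M (I r) = (\<Sum>s\<in>{1 - int T0..<r}. W r s * integral\<^sup>L M (I s))"
proof (rule integral_eq_of_real_cond_exp_AE_sum[OF assms(1)])
  show "subalgebra M (gen_sigma M (I ` {s. s < r} \<union> Y ` {1..<r}))"
    using assms(1,2) by (rule cf_model_history_subalgebra) (use assms(3) in auto)
  show "\<And>s. s \<in> {1 - int T0..<r} \<Longrightarrow> integrable M (I s)"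
    using cf_model_integrable_infections[OF assms(1,2)] assms(3) by auto
  show "integrable M (I r)"
    using assms(2,3) by (simp add: cf_model_def)
  show "AE \<omega> in M. real_cond_exp M (gen_sigma M (I ` {s. s < r} \<union> Y ` {1..<r})) (I r) \<omega>
      = (\<Sum>s\<in>{1 - int T0..<r}. W r s * I s \<omega>)"
    using assms(2,3) by (simp add: cf_model_def)
qed simp

lemma cf_model_mean_outcomes:
  assumes "finite_measure M" and "cf_model M T0 t Iseed W \<pi> \<alpha> I Y" and "r \<in> {1..int t}"
  shows "integral\<^sup>L M (Y r) = (\<Sum>s\<in>{1 - int T0..<r}. PiW \<pi> \<alpha> r s * integral\<^sup>L M (I s))"
proof (rule integral_eq_of_real_cond_exp_AE_sum[OF assms(1)])
  show "subalgebra M (gen_sigma M (I ` {s. s \<le> r} \<union> Y ` {1..<r}))"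
    using assms(1,2) by (rule cf_model_history_subalgebra) (use assms(3) in auto)
  show "\<And>s. s \<in> {1 - int T0..<r} \<Longrightarrow> integrable M (I s)"
    using cf_model_integrable_infections[OF assms(1,2)] assms(3) by auto
  show "integrable M (Y r)"
    using assms(2,3) by (simp add: cf_model_def)
  show "AE \<omega> in M. real_cond_exp M (gen_sigma M (I ` {s. s \<le> r} \<union> Y ` {1..<r})) (Y r) \<omega>
      = (\<Sum>s\<in>{1 - int T0..<r}. PiW \<pi> \<alpha> r s * I s \<omega>)"
    using assms(2,3) by (simp add: cf_model_def PiW_def sum_distrib_left mult_ac)
qed simp

lemma cf_model_mean_trajectory:
  assumes "prob_space M" and "cf_model M T0 t Iseed W \<pi> \<alpha> I Y"
  shows "traj_vec t (\<lambda>s. integral\<^sup>L M (I s))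
    = (the (mat_inverse (1\<^sub>m t - LamM t W)) * LamM0 t T0 W) *\<^sub>v Ibar0 T0 Iseed"
proof (rule fixed_point_LamM[where n = T0])
  define m where "m s = integral\<^sup>L M (I s)" for s
  have seed: "m s = Iseed s" if "1 - int T0 \<le> s" and "s \<le> 0" for s
    using cf_model_mean_seed[OF assms \<open>s \<le> 0\<close>] that by (simp add: m_def)
  show "traj_vec t (\<lambda>s. integral\<^sup>L M (I s))
      = LamM t W *\<^sub>v traj_vec t (\<lambda>s. integral\<^sup>L M (I s)) + LamM0 t T0 W *\<^sub>v Ibar0 T0 Iseed"
    unfolding m_def[symmetric]
  proof (rule eq_vecI)
    fix i assume "i < dim_vec (LamM t W *\<^sub>v traj_vec t m + LamM0 t T0 W *\<^sub>v Ibar0 T0 Iseed)"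
    then have "i < t" by simp
    have "traj_vec t m $ i = m (int i + 1)"
      using \<open>i < t\<close> by (simp add: traj_vec_def)
    also have "\<dots> = (\<Sum>s\<in>{1 - int T0..<int i + 1}. W (int i + 1) s * m s)"
      using cf_model_mean_infections[OF prob_space.finite_measure[OF assms(1)] assms(2), of "int i + 1"]
        \<open>i < t\<close>
      by (simp add: m_def)
    also have "\<dots> = (LamM t W *\<^sub>v traj_vec t m + LamM0 t T0 W *\<^sub>v Ibar0 T0 Iseed) $ i"
      by (rule LamM_convolution_nth[OF \<open>i < t\<close> seed, symmetric])
    finally show "traj_vec t m $ i = (LamM t W *\<^sub>v traj_vec t m + LamM0 t T0 W *\<^sub>v Ibar0 T0 Iseed) $ i" .
  qed simp
qed simp_all

lemma cf_model_mean_infections_last: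
  assumes "t \<ge> 1" and "prob_space M" and "cf_model M T0 t Iseed W \<pi> \<alpha> I Y"
  shows "integral\<^sup>L M (I (int t))
    = ((the (mat_inverse (1\<^sub>m t - LamM t W)) * LamM0 t T0 W) *\<^sub>v Ibar0 T0 Iseed) $ (t - 1)"
proof -
  have "integral\<^sup>L M (I (int t)) = traj_vec t (\<lambda>s. integral\<^sup>L M (I s)) $ (t - 1)"
    using \<open>t \<ge> 1\<close> by (simp add: traj_vec_def of_nat_diff)
  then show ?thesis
    by (simp only: cf_model_mean_trajectory[OF assms(2,3)])
qed

lemma cf_model_mean_outcomes_last:
  assumes "t \<ge> 1" and "prob_space M" and "cf_model M T0 t Iseed W \<pi> \<alpha> I Y"
  shows "integral\<^sup>L M (Y (int t))
    = ((LamM t (PiW \<pi> \<alpha>) * the (mat_inverse (1\<^sub>m t - LamM t W)) * LamM0 t T0 W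
        + LamM0 t T0 (PiW \<pi> \<alpha>)) *\<^sub>v Ibar0 T0 Iseed) $ (t - 1)"
proof -
  define m where "m s = integral\<^sup>L M (I s)" for s
  define Inv where "Inv = the (mat_inverse (1\<^sub>m t - LamM t W))"
  have Inv_carrier: "Inv \<in> carrier_mat t t"
    unfolding Inv_def by (rule mat_inverse_one_minus_LamM)
  have seed: "m s = Iseed s" if "1 - int T0 \<le> s" and "s \<le> 0" for s
    using cf_model_mean_seed[OF assms(2,3) \<open>s \<le> 0\<close>] that by (simp add: m_def)
  have last: "int (t - 1) + 1 = int t"
    using \<open>t \<ge> 1\<close> by simp
  have "integral\<^sup>L M (Y (int t)) = (\<Sum>s\<in>{1 - int T0..<int t}. PiW \<pi> \<alpha> (int t) s * m s)"
    using cf_model_mean_outcomes[OF prob_space.finite_measure[OF assms(2)] assms(3)] \<open>t \<ge> 1\<close>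
    by (simp add: m_def)
  also have "\<dots> = (LamM t (PiW \<pi> \<alpha>) *\<^sub>v traj_vec t m
      + LamM0 t T0 (PiW \<pi> \<alpha>) *\<^sub>v Ibar0 T0 Iseed) $ (t - 1)"
    using LamM_convolution_nth[of "t - 1" t T0 m Iseed "PiW \<pi> \<alpha>", OF _ seed] \<open>t \<ge> 1\<close>
    by (simp only: last)
  also have "traj_vec t m = (Inv * LamM0 t T0 W) *\<^sub>v Ibar0 T0 Iseed"
    unfolding m_def Inv_def by (rule cf_model_mean_trajectory[OF assms(2,3)])
  also have "LamM t (PiW \<pi> \<alpha>) *\<^sub>v ((Inv * LamM0 t T0 W) *\<^sub>v Ibar0 T0 Iseed)
      + LamM0 t T0 (PiW \<pi> \<alpha>) *\<^sub>v Ibar0 T0 Iseed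
      = (LamM t (PiW \<pi> \<alpha>) * Inv * LamM0 t T0 W + LamM0 t T0 (PiW \<pi> \<alpha>)) *\<^sub>v Ibar0 T0 Iseed"
    using LamM_carrier Inv_carrier LamM0_carrier LamM0_carrier Ibar0_carrier
    by (rule mult_mult_add_mat_vec[symmetric])
  finally show ?thesis unfolding Inv_def .
qed

theorem theorem1:
  fixes T0 t :: nat and \<beta>0 \<beta>A K :: real
    and g \<pi> :: "nat \<Rightarrow> real" and \<alpha> a Iseed :: "int \<Rightarrow> real"
  assumes "T0 \<ge> 1" and "t \<ge> 1"
    and "\<And>k. g k \<ge> 0" and "\<And>k. \<pi> k \<ge> 0"
    and "K > 0"
  shows
   "(\<forall>(M :: 'a measure) I Y. prob_space M \<longrightarrow>
       cf_model M T0 t Iseed (W_exp g \<beta>0 \<beta>A a) \<pi> \<alpha> I Y \<longrightarrow>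
       (let L = LamM t (W_exp g \<beta>0 \<beta>A a); L0 = LamM0 t T0 (W_exp g \<beta>0 \<beta>A a);
            P = LamM t (PiW \<pi> \<alpha>); P0 = LamM0 t T0 (PiW \<pi> \<alpha>);
            Inv = the (mat_inverse (1\<^sub>m t - L))
        in integral\<^sup>L M (I (int t)) = ((Inv * L0) *\<^sub>v Ibar0 T0 Iseed) $ (t - 1)
         \<and> integral\<^sup>L M (Y (int t)) = ((P * Inv * L0 + P0) *\<^sub>v Ibar0 T0 Iseed) $ (t - 1)))
  \<and> (\<forall>(M :: 'a measure) I Y. prob_space M \<longrightarrow>
       cf_model M T0 t Iseed (W_mult K g \<beta>0 \<beta>A a) \<pi> \<alpha> I Y \<longrightarrow>
       (let L = LamM t (W_mult K g \<beta>0 \<beta>A a); L0 = LamM0 t T0 (W_mult K g \<beta>0 \<beta>A a);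
            P = LamM t (PiW \<pi> \<alpha>); P0 = LamM0 t T0 (PiW \<pi> \<alpha>);
            Inv = the (mat_inverse (1\<^sub>m t - L))
        in integral\<^sup>L M (I (int t)) = ((Inv * L0) *\<^sub>v Ibar0 T0 Iseed) $ (t - 1)
         \<and> integral\<^sup>L M (Y (int t)) = ((P * Inv * L0 + P0) *\<^sub>v Ibar0 T0 Iseed) $ (t - 1)))"
  unfolding Let_def
  using cf_model_mean_infections_last[OF \<open>t \<ge> 1\<close>] cf_model_mean_outcomes_last[OF \<open>t \<ge> 1\<close>]
  by blast

end
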